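(* For each $m\ge1$, the sequence $(u_{k;m})_{k\ge0}$ is strictly increasing and converges to $b/(m+1)$: $$u_{0;m}<u_{1;m}<\dots<u_{k;m}<\dots,\qquad \lim_{k\to\infty}u_{k;m}=\frac{b}{m+1}.$$ Moreover, if $b=2$ and $d=1$, then $u_{0;m}=0$ for all $m\ge1$ and $u_{1;m}=2/(2^{m+1}-1)$ for all $m\ge0$.
   Context: Fix $b\ge2$ and $d\in\{0,\dots,b-1\}$. A string is a finite sequence $X=(d_l,\dots,d_1)$ of digits in $\{0,\dots,b-1\}$ (leading zeros allowed), of length $|X|=l\ge0$; its value is $n(X)=\sum_{i=1}^{l}d_ib^{i-1}$ ($0$ for the empty string). For $k\ge0$, $\mu_k=\sum_{X}b^{-|X|}\delta_{n(X)/b^{|X|}}$, the sum over all strings $X$ containing $d$ exactly $k$ times; it is a finite measure on $[0,1)$ of total mass $b$. The moments are $u_{k;m}=\int_{[0,1)}x^m\,d\mu_k(x)$. *)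

theory Defs
  imports "HOL-Analysis.Analysis"
begin

text \<open>A string in base b is a list of digits [d_l, ..., d_1] (most significant first,
  leading zeros allowed), each digit < b.\<close>

definition strings_with :: "nat \<Rightarrow> nat \<Rightarrow> nat \<Rightarrow> nat list set" where
  "strings_with b d k = {xs. set xs \<subseteq> {..<b} \<and> count_list xs d = k}"

text \<open>Value n(X) = sum d_i b^(i-1), with d_1 the last list entry.\<close>
definition str_val :: "nat \<Rightarrow> nat list \<Rightarrow> nat" where
  "str_val b xs = foldl (\<lambda>acc x. acc * b + x) 0 xs"

text \<open>Moment u_{k;m} = integral of x^m against
  mu_k = sum over strings X with exactly k copies of d of b^(-|X|) delta_{n(X)/b^|X|},
  written out as the (nonnegative, summable) sum of weights times x^m.\<close>
definition moment :: "nat \<Rightarrow> nat \<Rightarrow> nat \<Rightarrow> nat \<Rightarrow> real" where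
  "moment b d k m = (\<Sum>\<^sub>\<infinity> xs \<in> strings_with b d k.
      (1 / real b ^ length xs) * (real (str_val b xs) / real b ^ length xs) ^ m)"

end

theory Submission
  imports Defs
begin

text \<open>Splitting off the leading digit \<open>e\<close> of a string writes \<open>\<mu>\<^sub>k\<close> as the sum of the
  images of \<open>\<mu>\<^sub>k\<close> (for \<open>e \<noteq> d\<close>) and of \<open>\<mu>\<^bsub>k-1\<^esub>\<close> (for \<open>e = d\<close>) under
  \<open>x \<mapsto> (x + e) / b\<close>. Taking moments gives a triangular linear recurrence for \<open>u\<^bsub>k;m\<^esub>\<close>
  in which \<open>u\<^bsub>k;m\<^esub>\<close> itself occurs with coefficient \<open>(b - 1) / b\<^bsup>m+1\<^esup> < 1\<close>; for \<open>m = 0\<close>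
  it says that every \<open>\<mu>\<^sub>k\<close> has mass \<open>b\<close>. Subtracting the recurrences for \<open>k + 1\<close> and \<open>k\<close>
  and inducting on \<open>m\<close> shows that the increments \<open>u\<^bsub>k+1;m\<^esub> - u\<^bsub>k;m\<^esub>\<close> are positive, so
  each sequence increases and is bounded by \<open>b\<close>. The limits satisfy the recurrence with
  \<open>\<mu>\<^bsub>k-1\<^esub>\<close> replaced by \<open>\<mu>\<^sub>k\<close>, i.e. they are the moments of a measure of mass \<open>b\<close>
  invariant under all \<open>b\<close> contractions. By triangularity that recurrence has only one
  solution, the moments \<open>b / (m + 1)\<close> of \<open>b\<close> times Lebesgue measure on \<open>[0, 1]\<close>.\<close>

text \<open>The length predicate \<open>P\<close> allows the truncations used to prove summability.\<close>

definition digit_strings :: "nat \<Rightarrow> nat \<Rightarrow> nat \<Rightarrow> (nat \<Rightarrow> bool) \<Rightarrow> nat list set" where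
  "digit_strings b d k P = {xs. set xs \<subseteq> {..<b} \<and> count_list xs d = k \<and> P (length xs)}"

definition str_point :: "nat \<Rightarrow> nat list \<Rightarrow> real" where
  "str_point b xs = real (str_val b xs) / real b ^ length xs"

definition str_weight :: "nat \<Rightarrow> nat \<Rightarrow> nat list \<Rightarrow> real" where
  "str_weight b m xs = (1 / real b ^ length xs) * str_point b xs ^ m"

text \<open>If \<open>v j\<close> is the \<open>j\<close>-th moment of a measure, this is the \<open>m\<close>-th moment of its
  translate by \<open>e\<close>.\<close>

definition shifted_moment :: "nat \<Rightarrow> (nat \<Rightarrow> real) \<Rightarrow> nat \<Rightarrow> real" where
  "shifted_moment e v m = (\<Sum>j\<le>m. real (m choose j) * real e ^ (m - j) * v j)"

lemma moment_eq_infsum: "moment b d k m = infsum (str_weight b m) (digit_strings b d k (\<lambda>_. True))"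
  unfolding moment_def str_weight_def str_point_def digit_strings_def strings_with_def by simp

lemma foldl_str_val_start:
  fixes a b :: nat
  shows "foldl (\<lambda>acc x. acc * b + x) a ys = a * b ^ length ys + foldl (\<lambda>acc x. acc * b + x) 0 ys"
proof (induction ys arbitrary: a)
  case Nil
  then show ?case by simp
next
  case (Cons y ys)
  from Cons[of "a * b + y"] Cons[of y] show ?case
    by (simp add: algebra_simps)
qed

lemma str_val_Nil [simp]: "str_val b [] = 0"
  by (simp add: str_val_def)

lemma str_val_Cons: "str_val b (e # ys) = e * b ^ length ys + str_val b ys"
  unfolding str_val_def using foldl_str_val_start[of b e ys] by simp

lemma str_val_less: "set ys \<subseteq> {..<b} \<Longrightarrow> str_val b ys < b ^ length ys"
proof (induction ys)
  case Nil
  then show ?case by simp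
next
  case (Cons e ys)
  then have "e + 1 \<le> b" and "str_val b ys < b ^ length ys" by auto
  then have "str_val b (e # ys) < (e + 1) * b ^ length ys"
    by (simp add: str_val_Cons)
  also have "\<dots> \<le> b * b ^ length ys"
    using \<open>e + 1 \<le> b\<close> by (rule mult_right_mono) simp
  finally show ?case by simp
qed

lemma str_val_eq_0: "set xs \<subseteq> {0} \<Longrightarrow> str_val b xs = 0"
  by (induction xs) (auto simp: str_val_Cons)

lemma str_point_nonneg: "0 \<le> str_point b xs"
  by (simp add: str_point_def)

lemma str_point_less_one: "set xs \<subseteq> {..<b} \<Longrightarrow> str_point b xs < 1"
  using str_val_less[of xs b] by (simp add: str_point_def divide_less_eq of_nat_less_iff[symmetric])

lemma str_point_Cons: "b > 0 \<Longrightarrow> str_point b (e # ys) = (real e + str_point b ys) / real b"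
  by (simp add: str_point_def str_val_Cons field_simps)

lemma str_weight_nonneg: "0 \<le> str_weight b m xs"
  by (simp add: str_weight_def str_point_nonneg)

lemma str_weight_0: "str_weight b 0 xs = 1 / real b ^ length xs"
  by (simp add: str_weight_def)

lemma str_weight_le_str_weight_0: "set xs \<subseteq> {..<b} \<Longrightarrow> str_weight b m xs \<le> str_weight b 0 xs"
  unfolding str_weight_def
  using str_point_nonneg[of b xs] str_point_less_one[of xs b]
  by (intro mult_left_mono) (simp_all add: power_le_one)

lemma str_weight_Cons:
  assumes "b > 0"
  shows "str_weight b m (e # ys) = (1 / real b) ^ (m + 1) * shifted_moment e (\<lambda>j. str_weight b j ys) m"
proof -
  have "str_weight b m (e # ys)
      = (1 / real b) ^ (m + 1) * ((1 / real b ^ length ys) * (str_point b ys + real e) ^ m)"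
    using assms by (simp add: str_weight_def str_point_Cons power_divide field_simps)
  also have "(str_point b ys + real e) ^ m
      = (\<Sum>j\<le>m. real (m choose j) * str_point b ys ^ j * real e ^ (m - j))"
    by (rule binomial_ring)
  finally show ?thesis
    by (simp add: shifted_moment_def str_weight_def sum_distrib_left algebra_simps)
qed

lemma shifted_moment_0 [simp]: "shifted_moment e v 0 = v 0"
  by (simp add: shifted_moment_def)

lemma shifted_moment_eq_add:
  "shifted_moment e v m = v m + (\<Sum>j<m. real (m choose j) * real e ^ (m - j) * v j)"
  by (simp add: shifted_moment_def lessThan_Suc_atMost[symmetric])

lemma shifted_moment_zero_shift: "shifted_moment 0 v m = v m"
  by (auto simp: shifted_moment_eq_add intro!: sum.neutral)

lemma shifted_moment_diff:
  "shifted_moment e v m - shifted_moment e w m = shifted_moment e (\<lambda>j. v j - w j) m"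
  by (simp add: shifted_moment_def sum_subtractf[symmetric] algebra_simps)

lemma shifted_moment_ge:
  assumes "\<And>j. 0 \<le> v j"
  shows "v m \<le> shifted_moment e v m"
  unfolding shifted_moment_eq_add using assms by (auto intro!: sum_nonneg)

lemma shifted_moment_ge_power:
  assumes "\<And>j. 0 \<le> v j"
  shows "real e ^ m * v 0 \<le> shifted_moment e v m"
proof -
  have "real (m choose 0) * real e ^ (m - 0) * v 0 \<le> shifted_moment e v m"
    unfolding shifted_moment_def by (rule member_le_sum) (use assms in auto)
  then show ?thesis by simp
qed

lemma tendsto_shifted_moment:
  assumes "\<And>j. ((\<lambda>k. v k j) \<longlongrightarrow> l j) F"
  shows "((\<lambda>k. shifted_moment e (v k) m) \<longlongrightarrow> shifted_moment e l m) F"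
  unfolding shifted_moment_def by (intro tendsto_intros assms)

lemma pos_of_shifted_moment_rec:
  fixes D p :: "nat \<Rightarrow> real"
  assumes "finite E" "card E < b" "0 \<le> D 0"
    and rec: "\<And>m. m \<ge> 1 \<Longrightarrow> D m = (1 / real b) ^ (m + 1) * ((\<Sum>e\<in>E. shifted_moment e D m) + p m)"
    and pos: "\<And>m. m \<ge> 1 \<Longrightarrow> 0 < p m"
  shows "m \<ge> 1 \<Longrightarrow> 0 < D m"
proof (induction m rule: less_induct)
  case (less m)
  let ?c = "(1 / real b) ^ (m + 1)"
  let ?Q = "\<Sum>e\<in>E. \<Sum>j<m. real (m choose j) * real e ^ (m - j) * D j"
  have "0 \<le> D j" if "j < m" for j
    using less.IH[OF that] assms(3) by (cases "j = 0") auto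
  then have "0 \<le> ?Q"
    by (intro sum_nonneg) auto
  have "D m = ?c * (real (card E) * D m + ?Q + p m)"
    using rec[OF less.prems] by (simp add: shifted_moment_eq_add sum.distrib)
  then have "D m * (1 - ?c * real (card E)) = ?c * (?Q + p m)"
    by (simp add: algebra_simps)
  moreover have "0 < ?c * (?Q + p m)"
    using assms(2) pos[OF less.prems] \<open>0 \<le> ?Q\<close> by simp
  moreover have "?c * real (card E) < 1"
  proof -
    have "?c \<le> 1 / real b"
      using assms(2) by (simp add: power_le_one_iff field_simps)
    then have "?c * real (card E) \<le> real (card E) / real b"
      by (metis mult_right_mono of_nat_0_le_iff times_divide_eq_left mult_1)
    also have "\<dots> < 1"
      using assms(2) by simp
    finally show ?thesis .
  qed
  ultimately show ?case
    by (metis zero_less_mult_pos2 diff_gt_0_iff_gt)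
qed

lemma shifted_moment_fixpoint_unique:
  fixes f g :: "nat \<Rightarrow> real"
  assumes "b \<ge> 2" "f 0 = g 0"
    and f: "\<And>m. f m = (1 / real b) ^ (m + 1) * (\<Sum>e<b. shifted_moment e f m)"
    and g: "\<And>m. g m = (1 / real b) ^ (m + 1) * (\<Sum>e<b. shifted_moment e g m)"
  shows "f m = g m"
proof (induction m rule: less_induct)
  case (less m)
  show ?case
  proof (cases "m = 0")
    case True
    then show ?thesis using assms(2) by simp
  next
    case False
    define c where "c = (1 / real b) ^ (m + 1)"
    define Q where "Q = (\<Sum>e<b. \<Sum>j<m. real (m choose j) * real e ^ (m - j) * f j)"
    have "(\<Sum>e<b. \<Sum>j<m. real (m choose j) * real e ^ (m - j) * g j) = Q"
      unfolding Q_def using less.IH by simp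
    then have "f m = c * (real b * f m + Q)" "g m = c * (real b * g m + Q)"
      using f[of m] g[of m] by (simp_all add: shifted_moment_eq_add sum.distrib Q_def c_def)
    then have "(f m - g m) * (1 - c * real b) = 0"
      by (simp add: algebra_simps)
    moreover have "c * real b < 1"
      using assms(1) False by (simp add: c_def power_less_one_iff field_simps)
    ultimately show ?thesis
      by simp
  qed
qed

lemma shifted_moment_unit_interval:
  "shifted_moment e (\<lambda>j. 1 / (real j + 1)) m = ((real e + 1) ^ (m + 1) - real e ^ (m + 1)) / (real m + 1)"
proof -
  have "(real j + 1) * real (Suc m choose Suc j) = (real m + 1) * real (m choose j)" for j
    using Suc_times_binomial[of j m] by (metis of_nat_Suc of_nat_mult add.commute)
  then have q: "real (m choose j) / (real j + 1) = real (Suc m choose Suc j) / (real m + 1)" for j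
    by (simp add: field_simps del: binomial_Suc_Suc)
  have "shifted_moment e (\<lambda>j. 1 / (real j + 1)) m
      = (\<Sum>j\<le>m. real (m choose j) / (real j + 1) * real e ^ (m - j))"
    unfolding shifted_moment_def by (intro sum.cong refl) simp
  also have "\<dots> = (\<Sum>j\<le>m. real (Suc m choose Suc j) * real e ^ (m - j)) / (real m + 1)"
    unfolding q sum_divide_distrib by (intro sum.cong refl) simp
  also have "(\<Sum>j\<le>m. real (Suc m choose Suc j) * real e ^ (m - j))
      = (real e + 1) ^ (m + 1) - real e ^ (m + 1)"
  proof -
    have "(1 + real e) ^ (m + 1) = (\<Sum>i\<le>Suc m. real (Suc m choose i) * 1 ^ i * real e ^ (Suc m - i))"
      using binomial_ring[of 1 "real e" "Suc m"] by simp
    also have "\<dots> = real e ^ Suc m + (\<Sum>j\<le>m. real (Suc m choose Suc j) * real e ^ (m - j))"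
      by (subst sum.atMost_Suc_shift) simp
    finally show ?thesis
      by (simp add: add.commute)
  qed
  finally show ?thesis .
qed

text \<open>The numbers \<open>b / (m + 1)\<close> are the moments of \<open>b\<close> times Lebesgue measure on
  \<open>[0, 1]\<close>, which is invariant under the \<open>b\<close> contractions \<open>x \<mapsto> (x + e) / b\<close>.\<close>

lemma uniform_moments_fixpoint:
  assumes "b > 0"
  shows "(1 / real b) ^ (m + 1) * (\<Sum>e<b. shifted_moment e (\<lambda>j. real b / (real j + 1)) m)
    = real b / (real m + 1)"
proof -
  have "shifted_moment e (\<lambda>j. real b / (real j + 1)) m = real b * shifted_moment e (\<lambda>j. 1 / (real j + 1)) m" for e
    unfolding shifted_moment_def sum_distrib_left by (intro sum.cong refl) simp
  then have "(\<Sum>e<b. shifted_moment e (\<lambda>j. real b / (real j + 1)) m)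
      = real b / (real m + 1) * (\<Sum>e<b. (real e + 1) ^ (m + 1) - real e ^ (m + 1))"
    by (simp only: shifted_moment_unit_interval sum_distrib_left times_divide_eq_left times_divide_eq_right)
  also have "(\<Sum>e<b. (real e + 1) ^ (m + 1) - real e ^ (m + 1)) = real b ^ (m + 1)"
    using sum_lessThan_telescope[of "\<lambda>e. real e ^ (m + 1)" b] by (simp add: add.commute)
  finally show ?thesis
    using assms by (simp add: field_simps)
qed

subsection \<open>Decomposition by the leading digit\<close>

lemma has_sum_sum:
  fixes f :: "'i \<Rightarrow> 'a \<Rightarrow> 'b::topological_comm_monoid_add"
  assumes "finite I" "\<And>i. i \<in> I \<Longrightarrow> (f i has_sum s i) A"
  shows "((\<lambda>x. \<Sum>i\<in>I. f i x) has_sum (\<Sum>i\<in>I. s i)) A"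
  using assms
proof (induction I rule: finite_induct)
  case empty
  then show ?case by simp
next
  case (insert i I)
  then show ?case by (simp add: has_sum_add)
qed

lemma has_sum_str_weight_Cons_image:
  assumes "b > 0" and "\<And>j. j \<le> m \<Longrightarrow> (str_weight b j has_sum s j) A"
  shows "(str_weight b m has_sum (1 / real b) ^ (m + 1) * shifted_moment e s m) (Cons e ` A)"
proof -
  have "((\<lambda>ys. (1 / real b) ^ (m + 1) * shifted_moment e (\<lambda>j. str_weight b j ys) m)
      has_sum (1 / real b) ^ (m + 1) * shifted_moment e s m) A"
    unfolding shifted_moment_def
    by (intro has_sum_cmult_right has_sum_sum) (auto intro: has_sum_cmult_right assms(2))
  then have "((str_weight b m \<circ> Cons e) has_sum (1 / real b) ^ (m + 1) * shifted_moment e s m) A"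
    by (simp add: comp_def str_weight_Cons[OF assms(1)])
  then show ?thesis
    by (subst has_sum_reindex) auto
qed

lemma digit_strings_decomp:
  assumes "d < b"
  shows "digit_strings b d k P = (if k = 0 \<and> P 0 then {[]} else {})
     \<union> (\<Union>e\<in>{..<b} - {d}. Cons e ` digit_strings b d k (\<lambda>n. P (Suc n)))
     \<union> (if k = 0 then {} else Cons d ` digit_strings b d (k - 1) (\<lambda>n. P (Suc n)))"
    (is "_ = ?Nil \<union> ?Other \<union> ?D")
proof (intro set_eqI iffI)
  fix xs
  assume xs: "xs \<in> digit_strings b d k P"
  show "xs \<in> ?Nil \<union> ?Other \<union> ?D"
  proof (cases xs)
    case Nil
    then show ?thesis using xs by (simp add: digit_strings_def)
  next
    case (Cons e ys)
    then have ys: "ys \<in> digit_strings b d (if e = d then k - 1 else k) (\<lambda>n. P (Suc n))"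
      and "e < b" and k: "e = d \<Longrightarrow> k \<noteq> 0"
      using xs by (auto simp: digit_strings_def)
    show ?thesis
    proof (cases "e = d")
      case True
      then have "xs \<in> ?D" using Cons ys k by simp
      then show ?thesis by blast
    next
      case False
      then have "xs \<in> ?Other" using Cons ys \<open>e < b\<close> by auto
      then show ?thesis by blast
    qed
  qed
next
  fix xs
  assume "xs \<in> ?Nil \<union> ?Other \<union> ?D"
  then show "xs \<in> digit_strings b d k P"
    using assms by (auto simp: digit_strings_def split: if_splits)
qed

lemma has_sum_digit_strings:
  assumes "b > 0" "d < b"
    and "\<And>j. j \<le> m \<Longrightarrow> (str_weight b j has_sum s j) (digit_strings b d k (\<lambda>n. P (Suc n)))"
    and "\<And>j. k > 0 \<Longrightarrow> j \<le> m \<Longrightarrow>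
      (str_weight b j has_sum t j) (digit_strings b d (k - 1) (\<lambda>n. P (Suc n)))"
  shows "(str_weight b m has_sum (if k = 0 \<and> P 0 then 0 ^ m else 0) + (1 / real b) ^ (m + 1) *
      ((\<Sum>e\<in>{..<b} - {d}. shifted_moment e s m) + (if k = 0 then 0 else shifted_moment d t m)))
    (digit_strings b d k P)"
proof -
  let ?c = "(1 / real b) ^ (m + 1)"
  have empty: "(str_weight b m has_sum (if k = 0 \<and> P 0 then 0 ^ m else 0))
      (if k = 0 \<and> P 0 then {[]} else {})"
    by (auto intro!: has_sum_finiteI simp: str_weight_def str_point_def)
  have other_digits: "(str_weight b m has_sum (\<Sum>e\<in>{..<b} - {d}. ?c * shifted_moment e s m))
      (\<Union>e\<in>{..<b} - {d}. Cons e ` digit_strings b d k (\<lambda>n. P (Suc n)))"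
    by (intro sum_has_sum has_sum_str_weight_Cons_image assms(1,3)) auto
  have digit_d: "(str_weight b m has_sum (if k = 0 then 0 else ?c * shifted_moment d t m))
      (if k = 0 then {} else Cons d ` digit_strings b d (k - 1) (\<lambda>n. P (Suc n)))"
    using has_sum_str_weight_Cons_image[OF assms(1) assms(4)] by auto
  have "(str_weight b m has_sum (if k = 0 \<and> P 0 then 0 ^ m else 0)
      + (\<Sum>e\<in>{..<b} - {d}. ?c * shifted_moment e s m) + (if k = 0 then 0 else ?c * shifted_moment d t m))
    (digit_strings b d k P)" (is "(_ has_sum ?sum) _")
    by (subst digit_strings_decomp[OF assms(2)], intro has_sum_Un_disjoint empty other_digits digit_d) auto
  moreover have "?sum = (if k = 0 \<and> P 0 then 0 ^ m else 0) + ?c *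
      ((\<Sum>e\<in>{..<b} - {d}. shifted_moment e s m) + (if k = 0 then 0 else shifted_moment d t m))"
    by (simp add: sum_distrib_left distrib_left)
  ultimately show ?thesis
    by (simp only:)
qed

lemma finite_digit_strings_le: "finite (digit_strings b d k (\<lambda>l. l \<le> L))"
proof (rule finite_subset)
  show "digit_strings b d k (\<lambda>l. l \<le> L) \<subseteq> {xs. set xs \<subseteq> {..<b} \<and> length xs \<le> L}"
    by (auto simp: digit_strings_def)
qed (rule finite_lists_length_le; simp)

lemma sum_str_weight_0_le:
  assumes "b \<ge> 2" "d < b"
  shows "sum (str_weight b 0) (digit_strings b d k (\<lambda>l. l \<le> L)) \<le> real b"
proof (induction L arbitrary: k)
  case 0
  have "digit_strings b d k (\<lambda>l. l \<le> 0) = (if k = 0 then {[]} else {})"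
    by (auto simp: digit_strings_def)
  then show ?case
    using assms by (simp add: str_weight_0)
next
  case (Suc L)
  let ?S = "\<lambda>k. sum (str_weight b 0) (digit_strings b d k (\<lambda>l. l \<le> L))"
  have "(str_weight b 0 has_sum (if k = 0 \<and> 0 \<le> Suc L then 0 ^ 0 else 0) + (1 / real b) ^ (0 + 1) *
      ((\<Sum>e\<in>{..<b} - {d}. shifted_moment e (\<lambda>j. ?S k) 0)
        + (if k = 0 then 0 else shifted_moment d (\<lambda>j. ?S (k - 1)) 0)))
    (digit_strings b d k (\<lambda>l. l \<le> Suc L))"
    by (rule has_sum_digit_strings) (use assms in \<open>simp_all add: finite_digit_strings_le\<close>)
  then have "sum (str_weight b 0) (digit_strings b d k (\<lambda>l. l \<le> Suc L))
      = (if k = 0 then 1 else 0) + ((real b - 1) * ?S k + (if k = 0 then 0 else ?S (k - 1))) / real b"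
    using assms by (cases "k = 0") (simp_all add: has_sum_finite_iff finite_digit_strings_le of_nat_diff)
  also have "\<dots> \<le> (if k = 0 then 1 else 0) + ((real b - 1) * real b + (if k = 0 then 0 else real b)) / real b"
    using Suc[of k] Suc[of "k - 1"] assms by (intro add_left_mono divide_right_mono add_mono mult_left_mono) auto
  also have "\<dots> = real b"
    using assms by (simp add: field_simps)
  finally show ?case .
qed

lemma str_weight_summable_on:
  assumes "b \<ge> 2" "d < b"
  shows "str_weight b m summable_on digit_strings b d k (\<lambda>_. True)"
proof (rule summable_on_comparison_test)
  show "str_weight b 0 summable_on digit_strings b d k (\<lambda>_. True)"
  proof (rule nonneg_bdd_above_summable_on)
    show "bdd_above (sum (str_weight b 0) ` {F. F \<subseteq> digit_strings b d k (\<lambda>_. True) \<and> finite F})"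
    proof (rule bdd_aboveI, safe)
      fix F
      assume F: "F \<subseteq> digit_strings b d k (\<lambda>_. True)" "finite F"
      define L where "L = Max (length ` F)"
      have "F \<subseteq> digit_strings b d k (\<lambda>l. l \<le> L)"
        using F by (auto simp: L_def digit_strings_def)
      then have "sum (str_weight b 0) F \<le> sum (str_weight b 0) (digit_strings b d k (\<lambda>l. l \<le> L))"
        by (intro sum_mono2 finite_digit_strings_le) (auto simp: str_weight_nonneg)
      also have "\<dots> \<le> real b"
        by (rule sum_str_weight_0_le[OF assms])
      finally show "sum (str_weight b 0) F \<le> real b" .
    qed
  qed (simp add: str_weight_nonneg)
qed (auto simp: str_weight_nonneg digit_strings_def intro!: str_weight_le_str_weight_0)

lemma moment_has_sum:
  assumes "b \<ge> 2" "d < b"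
  shows "(str_weight b m has_sum moment b d k m) (digit_strings b d k (\<lambda>_. True))"
  unfolding moment_eq_infsum using str_weight_summable_on[OF assms] by (rule has_sum_infsum)

lemma moment_rec:
  assumes "b \<ge> 2" "d < b"
  shows "moment b d k m = (if k = 0 then 0 ^ m else 0) + (1 / real b) ^ (m + 1) *
    ((\<Sum>e\<in>{..<b} - {d}. shifted_moment e (moment b d k) m)
      + (if k = 0 then 0 else shifted_moment d (moment b d (k - 1)) m))"
proof -
  have "(str_weight b m has_sum (if k = 0 \<and> True then 0 ^ m else 0) + (1 / real b) ^ (m + 1) *
      ((\<Sum>e\<in>{..<b} - {d}. shifted_moment e (moment b d k) m)
        + (if k = 0 then 0 else shifted_moment d (moment b d (k - 1)) m)))
    (digit_strings b d k (\<lambda>_. True))"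
    by (rule has_sum_digit_strings) (use assms in \<open>auto intro: moment_has_sum\<close>)
  from has_sum_unique[OF moment_has_sum[OF assms] this] show ?thesis
    by simp
qed

lemma moment_0:
  assumes "b \<ge> 2" "d < b"
  shows "moment b d k 0 = real b"
proof (induction k)
  case 0
  from moment_rec[OF assms, of 0 0] assms show ?case
    by (simp add: of_nat_diff field_simps)
next
  case (Suc k)
  from moment_rec[OF assms, of "Suc k" 0] Suc assms show ?case
    by (simp add: of_nat_diff field_simps)
qed

lemma moment_nonneg: "0 \<le> moment b d k m"
  unfolding moment_eq_infsum by (rule infsum_nonneg) (simp add: str_weight_nonneg)

lemma moment_le:
  assumes "b \<ge> 2" "d < b"
  shows "moment b d k m \<le> real b"
proof -
  have "moment b d k m \<le> moment b d k 0"
    unfolding moment_eq_infsum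
    by (intro infsum_mono str_weight_summable_on[OF assms])
      (auto simp: digit_strings_def intro: str_weight_le_str_weight_0)
  then show ?thesis
    by (simp add: moment_0[OF assms])
qed

definition moment_increment :: "nat \<Rightarrow> nat \<Rightarrow> nat \<Rightarrow> nat \<Rightarrow> real" where
  "moment_increment b d k m = moment b d k m - (if k = 0 then 0 else moment b d (k - 1) m)"

context
  fixes b d :: nat
  assumes base: "b \<ge> 2" "d < b"
begin

subsection \<open>Monotonicity in \<open>k\<close>\<close>

lemma moment_increment_eq:
  "moment_increment b d k = (\<lambda>j. moment b d k j - (if k = 0 then 0 else moment b d (k - 1) j))"
  by (simp add: fun_eq_iff moment_increment_def)

lemma moment_increment_rec:
  assumes "m \<ge> 1"
  shows "moment_increment b d (Suc k) m = (1 / real b) ^ (m + 1) *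
    ((\<Sum>e\<in>{..<b} - {d}. shifted_moment e (moment_increment b d (Suc k)) m)
      + shifted_moment d (moment_increment b d k) m)"
proof -
  have "moment b d (Suc k) m - moment b d k m = (1 / real b) ^ (m + 1) *
    ((\<Sum>e\<in>{..<b} - {d}. shifted_moment e (moment b d (Suc k)) m - shifted_moment e (moment b d k) m)
      + (shifted_moment d (moment b d k) m
         - shifted_moment d (\<lambda>j. if k = 0 then 0 else moment b d (k - 1) j) m))"
    using moment_rec[OF base, of "Suc k" m] moment_rec[OF base, of k m] assms
    by (cases "k = 0") (simp_all add: shifted_moment_def sum_subtractf algebra_simps)
  then show ?thesis
    by (simp add: moment_increment_eq shifted_moment_diff)
qed

lemma shifted_moment_moment_0_pos:
  assumes "m \<ge> 1"
  shows "0 < shifted_moment d (moment b d 0) m"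
proof (cases "d = 0")
  case True
  have "[1] \<in> digit_strings b d 0 (\<lambda>_. True)"
    using base True by (auto simp: digit_strings_def)
  then have "str_weight b m [1] \<le> moment b d 0 m"
    using finite_sum_le_infsum[OF str_weight_summable_on[OF base], of "{[1]}"]
    by (simp add: moment_eq_infsum str_weight_nonneg)
  moreover have "0 < str_weight b m [1]"
    using base by (simp add: str_weight_def str_point_def str_val_Cons)
  ultimately show ?thesis
    using True by (simp add: shifted_moment_zero_shift)
next
  case False
  have "real d ^ m * moment b d 0 0 \<le> shifted_moment d (moment b d 0) m"
    by (rule shifted_moment_ge_power) (rule moment_nonneg)
  moreover have "0 < real d ^ m * moment b d 0 0"
    using False base by (simp add: moment_0)
  ultimately show ?thesis by simp
qed

lemma moment_increment_Suc_pos: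
  assumes "\<And>m. m \<ge> 1 \<Longrightarrow> 0 < shifted_moment d (moment_increment b d k) m" and "m \<ge> 1"
  shows "0 < moment_increment b d (Suc k) m"
proof (rule pos_of_shifted_moment_rec[OF _ _ _ moment_increment_rec assms])
  show "0 \<le> moment_increment b d (Suc k) 0"
    by (simp add: moment_increment_def moment_0[OF base])
qed (use base in auto)

lemma shifted_moment_increment_pos:
  "m \<ge> 1 \<Longrightarrow> 0 < shifted_moment d (moment_increment b d k) m"
proof (induction k arbitrary: m)
  case 0
  then show ?case
    by (simp add: moment_increment_def shifted_moment_moment_0_pos)
next
  case (Suc k)
  have "0 \<le> moment_increment b d (Suc k) j" for j
    using moment_increment_Suc_pos[OF Suc.IH, of j]
    by (cases "j = 0") (auto simp: moment_increment_def moment_0[OF base])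
  then show ?case
    using shifted_moment_ge moment_increment_Suc_pos[OF Suc.IH Suc.prems] by (metis order.strict_trans2)
qed

lemma moment_less_moment_Suc: "m \<ge> 1 \<Longrightarrow> moment b d k m < moment b d (Suc k) m"
  using moment_increment_Suc_pos[OF shifted_moment_increment_pos] by (simp add: moment_increment_def)

subsection \<open>The limit\<close>

lemma incseq_moment: "incseq (\<lambda>k. moment b d k m)"
proof (cases "m = 0")
  case True
  then show ?thesis by (simp add: moment_0[OF base] incseq_def)
next
  case False
  then show ?thesis
    by (intro incseq_SucI less_imp_le[OF moment_less_moment_Suc]) simp
qed

lemma moment_limit_fixpoint:
  assumes L: "\<And>m. (\<lambda>k. moment b d k m) \<longlonglongrightarrow> L m"
  shows "L m = (1 / real b) ^ (m + 1) * (\<Sum>e<b. shifted_moment e L m)"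
proof -
  let ?c = "(1 / real b) ^ (m + 1)"
  have rec: "?c * ((\<Sum>e\<in>{..<b} - {d}. shifted_moment e (moment b d (Suc k)) m)
      + shifted_moment d (moment b d k) m) = moment b d (Suc k) m" for k
    using moment_rec[OF base, of "Suc k" m] by simp
  have "(\<lambda>k. shifted_moment e (moment b d (Suc k)) m) \<longlonglongrightarrow> shifted_moment e L m" for e
    by (rule tendsto_shifted_moment, rule LIMSEQ_Suc, rule L)
  moreover have "(\<lambda>k. shifted_moment d (moment b d k) m) \<longlonglongrightarrow> shifted_moment d L m"
    by (rule tendsto_shifted_moment, rule L)
  ultimately have "(\<lambda>k. ?c * ((\<Sum>e\<in>{..<b} - {d}. shifted_moment e (moment b d (Suc k)) m)
      + shifted_moment d (moment b d k) m))
    \<longlonglongrightarrow> ?c * ((\<Sum>e\<in>{..<b} - {d}. shifted_moment e L m) + shifted_moment d L m)"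
    by (intro tendsto_mult_left tendsto_add tendsto_sum)
  then have "L m = ?c * ((\<Sum>e\<in>{..<b} - {d}. shifted_moment e L m) + shifted_moment d L m)"
    unfolding rec by (rule LIMSEQ_unique[OF LIMSEQ_Suc[OF L]])
  also have "\<dots> = ?c * (\<Sum>e<b. shifted_moment e L m)"
    using base by (simp add: sum.remove[of "{..<b}" d])
  finally show ?thesis .
qed

lemma moment_tendsto: "(\<lambda>k. moment b d k m) \<longlonglongrightarrow> real b / (real m + 1)"
proof -
  define L where "L m = lim (\<lambda>k. moment b d k m)" for m
  have L: "(\<lambda>k. moment b d k m) \<longlonglongrightarrow> L m" for m
  proof -
    obtain l where "(\<lambda>k. moment b d k m) \<longlonglongrightarrow> l"
      using incseq_convergent[OF incseq_moment] moment_le[OF base] by blast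
    then show ?thesis
      by (simp add: L_def limI)
  qed
  have "L m = real b / (real m + 1)"
  proof (rule shifted_moment_fixpoint_unique[OF base(1)])
    show "L 0 = real b / (real 0 + 1)"
      using L[of 0] by (simp add: moment_0[OF base] LIMSEQ_const_iff)
    show "L m = (1 / real b) ^ (m + 1) * (\<Sum>e<b. shifted_moment e L m)" for m
      by (rule moment_limit_fixpoint[OF L])
    show "real b / (real m + 1)
      = (1 / real b) ^ (m + 1) * (\<Sum>e<b. shifted_moment e (\<lambda>j. real b / (real j + 1)) m)" for m
      by (rule uniform_moments_fixpoint[symmetric]) (use base in simp)
  qed
  then show ?thesis
    using L[of m] by simp
qed

end

subsection \<open>Base 2 with distinguished digit 1\<close>

lemma moment_2_1_0:
  assumes "m \<ge> 1"
  shows "moment 2 1 0 m = 0"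
  unfolding moment_eq_infsum
proof (rule infsum_0)
  fix xs
  assume "xs \<in> digit_strings 2 1 0 (\<lambda>_. True)"
  then have "set xs \<subseteq> {0}"
    by (auto simp: digit_strings_def count_list_0_iff less_2_cases_iff)
  then show "str_weight 2 m xs = 0"
    using assms by (simp add: str_weight_def str_point_def str_val_eq_0)
qed

lemma moment_2_1_1: "moment 2 1 1 m = 2 / (2 ^ (m + 1) - 1)"
proof -
  have "shifted_moment 1 (moment 2 1 0) m = 2"
  proof -
    have "shifted_moment 1 (moment 2 1 0) m = (\<Sum>j\<le>m. if j = 0 then 2 else 0)"
      unfolding shifted_moment_def
      using moment_2_1_0 moment_0[of 2 1 0] by (intro sum.cong) auto
    then show ?thesis by simp
  qed
  moreover have "shifted_moment 0 (moment 2 1 1) m = moment 2 1 1 m"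
    by (rule shifted_moment_zero_shift)
  moreover have "{..<2::nat} - {1} = {0}"
    by auto
  ultimately have "moment 2 1 1 m = (1 / 2) ^ (m + 1) * (moment 2 1 1 m + 2)"
    using moment_rec[of 2 1 1 m] by simp
  then have "moment 2 1 1 m * (2 ^ (m + 1) - 1) = 2"
    by (simp add: field_simps power_divide)
  moreover have "(2::real) ^ (m + 1) > 1"
    by (rule one_less_power) auto
  ultimately show ?thesis
    by (simp add: field_simps)
qed

theorem mainTheorem11:
  fixes b d :: nat
  assumes "b \<ge> 2" and "d < b"
  shows "(\<forall>m\<ge>1. strict_mono (\<lambda>k. moment b d k m) \<and>
              (\<lambda>k. moment b d k m) \<longlonglongrightarrow> real b / (real m + 1))
       \<and> (b = 2 \<and> d = 1 \<longrightarrow>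
            (\<forall>m\<ge>1. moment b d 0 m = 0) \<and>
            (\<forall>m. moment b d 1 m = 2 / (2 ^ (m + 1) - 1)))"
proof (intro conjI allI impI)
  fix m :: nat
  assume "m \<ge> 1"
  then show "strict_mono (\<lambda>k. moment b d k m)"
    unfolding strict_mono_Suc_iff using moment_less_moment_Suc[OF assms] by blast
  show "(\<lambda>k. moment b d k m) \<longlonglongrightarrow> real b / (real m + 1)"
    by (rule moment_tendsto[OF assms])
next
  fix m :: nat
  assume "b = 2 \<and> d = 1" "m \<ge> 1"
  then show "moment b d 0 m = 0"
    using moment_2_1_0 by simp
next
  fix m :: nat
  assume "b = 2 \<and> d = 1"
  then show "moment b d 1 m = 2 / (2 ^ (m + 1) - 1)"
    using moment_2_1_1 by simp
qed

end
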